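(* Let $k\ge2$ and let $\mathcal C_2$ be the binary $(2k+1,k)$ code with generator matrix $G_c=(e_1\ \ e_1\ \ e_1+e_2\ \ e_2\ \ e_2+e_3\ \ e_3\ \cdots\ e_{k-1}+e_k\ \ e_k\ \ e_k)$. Then every erasure pattern with at most $2$ erasures allows for parallel $3$-repair.
   Context: $e_i$ denotes the $i$-th standard unit vector of $\mathbb F_2^k$; $\mathcal C_2$ has minimum distance $3$. Let $g_1,\dots,g_{2k+1}$ be the columns of $G_c$; nodes are the coordinates of codewords $c=uG_c$. An erasure pattern is a set of erased nodes; the others are live. A node $c_i$ is related to distinct nodes $c_{j_1},\dots,c_{j_\gamma}$ (all different from $c_i$) if $g_i=g_{j_1}+\dots+g_{j_\gamma}$. An erased node allows for $r$-repair if it is related to $\gamma\le r$ live nodes. An erasure pattern allows for parallel $r$-repair if each erased node allows for $r$-repair with respect to the original set of live nodes. *)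

theory Defs
  imports Main "HOL-Library.Z2"
begin

text \<open>Vectors of F_2^k are represented as functions nat => bit supported on {1..k}.\<close>

definition unitv :: "nat \<Rightarrow> nat \<Rightarrow> bit" where
  "unitv i = (\<lambda>l. if l = i then 1 else 0)"

definition vadd :: "(nat \<Rightarrow> bit) \<Rightarrow> (nat \<Rightarrow> bit) \<Rightarrow> nat \<Rightarrow> bit" where
  "vadd u v = (\<lambda>l. u l + v l)"

text \<open>Columns g_1 .. g_{2k+1} of G_c =
  (e_1, e_1, e_1+e_2, e_2, e_2+e_3, e_3, ..., e_{k-1}+e_k, e_k, e_k).\<close>
definition gcol :: "nat \<Rightarrow> nat \<Rightarrow> nat \<Rightarrow> bit" where
  "gcol k j =
     (if j = 1 then unitv 1
      else if j = 2 * k + 1 then unitv k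
      else if even j then unitv (j div 2)
      else vadd (unitv ((j - 1) div 2)) (unitv ((j + 1) div 2)))"

definition nodes :: "nat \<Rightarrow> nat set" where
  "nodes k = {1..2 * k + 1}"

definition related :: "nat \<Rightarrow> nat \<Rightarrow> nat set \<Rightarrow> bool" where
  "related k i J \<longleftrightarrow> i \<in> nodes k \<and> J \<subseteq> nodes k \<and> i \<notin> J \<and>
     gcol k i = (\<lambda>l. \<Sum>j\<in>J. gcol k j l)"

definition allows_repair :: "nat \<Rightarrow> nat \<Rightarrow> nat set \<Rightarrow> nat \<Rightarrow> bool" where
  "allows_repair k r E i \<longleftrightarrow>
     (\<exists>J. related k i J \<and> card J \<le> r \<and> J \<subseteq> nodes k - E)"

definition allows_parallel_repair :: "nat \<Rightarrow> nat \<Rightarrow> nat set \<Rightarrow> bool" where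
  "allows_parallel_repair k r E \<longleftrightarrow> (\<forall>i\<in>E. allows_repair k r E i)"

end

theory Submission
  imports Defs
begin

text \<open>Every node has two disjoint repair sets of size at most 3; whichever second node is erased,
  one of the two avoids it. The repair sets come from the chain shape of G_c: the unit vector e_m is
  the column sum of at most two nodes to the left of node 2m (node 1 if m = 1, nodes 2m-2 and 2m-1
  otherwise) and of at most two nodes to its right (node 2k+1 if m = k, nodes 2m+1 and 2m+2
  otherwise). A node with column e_m is repaired by a left and a right set for e_m (or by its twin
  copy, for nodes 1 and 2k+1); node 2m+1, with column e_m + e_{m+1}, is repaired both by the left
  set for e_m together with node 2m+2 and by node 2m together with the right set for e_{m+1}.\<close>

lemma card_le_2_subset_pair:
  assumes "finite E" "card E \<le> 2" "i \<in> E"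
  obtains j where "E \<subseteq> {i, j}"
proof (cases "E - {i} = {}")
  case True
  then show ?thesis using that by blast
next
  case False
  then obtain j where "j \<in> E - {i}" by blast
  moreover have "card (E - {i}) \<le> 1" using assms by simp
  ultimately have "E - {i} \<subseteq> {j}" using assms(1) by (auto simp: card_le_Suc0_iff_eq)
  then show ?thesis using that by blast
qed

definition colsum :: "nat \<Rightarrow> nat set \<Rightarrow> nat \<Rightarrow> bit" where
  "colsum k J = (\<lambda>l. \<Sum>j\<in>J. gcol k j l)"

lemma related_iff_colsum:
  "related k i J \<longleftrightarrow> i \<in> nodes k \<and> J \<subseteq> nodes k \<and> i \<notin> J \<and> gcol k i = colsum k J"
  by (simp add: related_def colsum_def)

(* The library simp rule add_bit_eq_xor would rewrite bit addition into XOR. *)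
lemma colsum_singleton [simp]: "colsum k {j} = gcol k j"
  by (simp add: colsum_def del: add_bit_eq_xor)

lemma colsum_Un:
  "finite A \<Longrightarrow> finite B \<Longrightarrow> A \<inter> B = {} \<Longrightarrow> colsum k (A \<union> B) = vadd (colsum k A) (colsum k B)"
  by (simp add: colsum_def vadd_def sum.union_disjoint del: add_bit_eq_xor)

lemma colsum_doubleton: "a \<noteq> b \<Longrightarrow> colsum k {a, b} = vadd (gcol k a) (gcol k b)"
  using colsum_Un[of "{a}" "{b}" k] by (simp add: insert_commute)

lemma bit_add_self_cancel: "(x :: bit) + (x + y) = y"
  by (cases x) simp_all

lemma bit_add_cancel_right: "(x :: bit) + y + y = x"
  by (cases y) simp_all

lemma vadd_cancel_left: "vadd u (vadd u v) = v"
  by (simp add: vadd_def bit_add_self_cancel del: add_bit_eq_xor)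

lemma vadd_cancel_right: "vadd (vadd u v) v = u"
  by (simp add: vadd_def bit_add_cancel_right del: add_bit_eq_xor)

lemma gcol_first: "gcol k 1 = unitv 1"
  by (simp add: gcol_def)

lemma gcol_last: "1 \<le> k \<Longrightarrow> gcol k (2 * k + 1) = unitv k"
  by (simp add: gcol_def)

lemma gcol_even: "1 \<le> m \<Longrightarrow> m \<le> k \<Longrightarrow> gcol k (2 * m) = unitv m"
  by (simp add: gcol_def)

lemma gcol_odd: "1 \<le> m \<Longrightarrow> m < k \<Longrightarrow> gcol k (2 * m + 1) = vadd (unitv m) (unitv (m + 1))"
  by (simp add: gcol_def)

lemma unitv_as_colsum_left:
  assumes "1 \<le> m" "m \<le> k"
  obtains L where "L \<subseteq> nodes k" "L \<subseteq> {..<2 * m}" "card L \<le> 2" "colsum k L = unitv m"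
proof (cases "m = 1")
  case True
  show ?thesis
    by (rule that[of "{1}"]) (use True assms gcol_first[of k] in \<open>simp_all add: nodes_def\<close>)
next
  case False
  then obtain n where n: "m = n + 1" "1 \<le> n" "n < k"
    using assms by (cases m) auto
  have "colsum k {2 * n, 2 * n + 1} = vadd (gcol k (2 * n)) (gcol k (2 * n + 1))"
    by (simp add: colsum_doubleton)
  also have "\<dots> = vadd (unitv n) (vadd (unitv n) (unitv (n + 1)))"
    by (simp only: gcol_even gcol_odd n less_imp_le)
  also have "\<dots> = unitv m"
    by (simp add: vadd_cancel_left n)
  finally show ?thesis
    using n by (intro that[of "{2 * n, 2 * n + 1}"]) (auto simp: nodes_def card_insert_if)
qed

lemma unitv_as_colsum_right:
  assumes "1 \<le> m" "m \<le> k"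
  obtains R where "R \<subseteq> nodes k" "R \<subseteq> {2 * m<..}" "card R \<le> 2" "colsum k R = unitv m"
proof (cases "m = k")
  case True
  show ?thesis
    by (rule that[of "{2 * k + 1}"]) (use True assms gcol_last[of k] in \<open>simp_all add: nodes_def\<close>)
next
  case False
  with assms have m: "m < k" by simp
  have "colsum k {2 * m + 1, 2 * (m + 1)} = vadd (gcol k (2 * m + 1)) (gcol k (2 * (m + 1)))"
    by (simp add: colsum_doubleton)
  also have "\<dots> = vadd (vadd (unitv m) (unitv (m + 1))) (unitv (m + 1))"
    using assms m by (simp only: gcol_odd gcol_even[of "m + 1"] le_add2 Suc_eq_plus1 Suc_leI)
  also have "\<dots> = unitv m"
    by (rule vadd_cancel_right)
  finally show ?thesis
    using assms m by (intro that[of "{2 * m + 1, 2 * (m + 1)}"]) (auto simp: nodes_def card_insert_if)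
qed

definition two_disjoint_repair_sets :: "nat \<Rightarrow> nat \<Rightarrow> nat \<Rightarrow> bool" where
  "two_disjoint_repair_sets k r i \<longleftrightarrow>
     (\<exists>A B. related k i A \<and> card A \<le> r \<and> related k i B \<and> card B \<le> r \<and> A \<inter> B = {})"

lemma two_disjoint_repair_sets_avoid:
  assumes "two_disjoint_repair_sets k r i"
  obtains J where "related k i J" "card J \<le> r" "j \<notin> J"
  using assms unfolding two_disjoint_repair_sets_def by blast

lemma node_cases:
  assumes "i \<in> nodes k"
  obtains "i = 1" | "i = 2 * k + 1"
    | m where "1 \<le> m" "m \<le> k" "i = 2 * m"
    | m where "1 \<le> m" "m < k" "i = 2 * m + 1"
proof (cases "even i")
  case True
  then obtain m where "i = 2 * m" ..
  with assms show ?thesis by (intro that(3)[of m]) (auto simp: nodes_def)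
next
  case False
  then obtain m where i: "i = 2 * m + 1" using oddE by blast
  with assms have "m \<le> k" by (simp add: nodes_def)
  then consider "m = 0" | "m = k" | "1 \<le> m" "m < k" by linarith
  then show ?thesis using i that(1,2,4) by cases simp_all
qed

lemma two_disjoint_repair_sets_first_node:
  assumes "k \<ge> 2"
  shows "two_disjoint_repair_sets k 3 1"
proof -
  obtain R where R: "R \<subseteq> nodes k" "R \<subseteq> {2<..}" "card R \<le> 2" "colsum k R = unitv 1"
    using unitv_as_colsum_right[of 1 k] assms by auto
  have "related k 1 {2}" "related k 1 R"
    using assms R gcol_first[of k] gcol_even[of 1 k] by (auto simp: related_iff_colsum nodes_def)
  moreover have "{2} \<inter> R = {}" using R(2) by auto
  ultimately show ?thesis
    using R(3) unfolding two_disjoint_repair_sets_def by (intro exI[of _ "{2}"] exI[of _ R]) simp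
qed

lemma two_disjoint_repair_sets_last_node:
  assumes "k \<ge> 2"
  shows "two_disjoint_repair_sets k 3 (2 * k + 1)"
proof -
  obtain L where L: "L \<subseteq> nodes k" "L \<subseteq> {..<2 * k}" "card L \<le> 2" "colsum k L = unitv k"
    using unitv_as_colsum_left[of k k] assms by auto
  have "related k (2 * k + 1) {2 * k}" "related k (2 * k + 1) L"
    using assms L gcol_last[of k] gcol_even[of k k] by (auto simp: related_iff_colsum nodes_def)
  moreover have "{2 * k} \<inter> L = {}" using L(2) by auto
  ultimately show ?thesis
    using L(3) unfolding two_disjoint_repair_sets_def by (intro exI[of _ "{2 * k}"] exI[of _ L]) simp
qed

lemma two_disjoint_repair_sets_even_node:
  assumes "1 \<le> m" "m \<le> k"
  shows "two_disjoint_repair_sets k 3 (2 * m)"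
proof -
  obtain L where L: "L \<subseteq> nodes k" "L \<subseteq> {..<2 * m}" "card L \<le> 2" "colsum k L = unitv m"
    using unitv_as_colsum_left assms by blast
  obtain R where R: "R \<subseteq> nodes k" "R \<subseteq> {2 * m<..}" "card R \<le> 2" "colsum k R = unitv m"
    using unitv_as_colsum_right assms by blast
  have "related k (2 * m) L" "related k (2 * m) R"
    using assms L R gcol_even[OF assms] by (auto simp: related_iff_colsum nodes_def)
  moreover have "L \<inter> R = {}" using L(2) R(2) by fastforce
  ultimately show ?thesis
    using L(3) R(3) unfolding two_disjoint_repair_sets_def by (intro exI[of _ L] exI[of _ R]) simp
qed

lemma two_disjoint_repair_sets_odd_node:
  assumes "1 \<le> m" "m < k"
  shows "two_disjoint_repair_sets k 3 (2 * m + 1)"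
proof -
  obtain L where L: "L \<subseteq> nodes k" "L \<subseteq> {..<2 * m}" "card L \<le> 2" "colsum k L = unitv m"
    using unitv_as_colsum_left[of m k] assms by auto
  obtain R where R: "R \<subseteq> nodes k" "R \<subseteq> {2 * (m + 1)<..}" "card R \<le> 2"
    "colsum k R = unitv (m + 1)"
    using unitv_as_colsum_right[of "m + 1" k] assms by auto
  define A where "A = L \<union> {2 * (m + 1)}"
  define B where "B = {2 * m} \<union> R"
  have "finite L" "finite R"
    using L(1) R(1) finite_subset by (auto simp: nodes_def)
  moreover have "L \<inter> {2 * (m + 1)} = {}" "{2 * m} \<inter> R = {}"
    using L(2) R(2) by auto
  ultimately have "colsum k A = vadd (colsum k L) (gcol k (2 * (m + 1)))"
    "colsum k B = vadd (gcol k (2 * m)) (colsum k R)"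
    unfolding A_def B_def by (simp_all only: colsum_Un finite.intros colsum_singleton)
  then have "colsum k A = vadd (unitv m) (unitv (m + 1))" "colsum k B = vadd (unitv m) (unitv (m + 1))"
    using L(4) R(4) gcol_even[of m k] gcol_even[of "m + 1" k] assms by simp_all
  then have "gcol k (2 * m + 1) = colsum k A" "gcol k (2 * m + 1) = colsum k B"
    using gcol_odd[OF assms] by simp_all
  moreover have card: "card A \<le> 3" "card B \<le> 3"
    using L(3) R(3) card_Un_le[of L "{2 * (m + 1)}"] card_Un_le[of "{2 * m}" R]
    unfolding A_def B_def by simp_all
  moreover have "A \<subseteq> nodes k" "B \<subseteq> nodes k"
    using assms L(1) R(1) by (auto simp: A_def B_def nodes_def)
  moreover have "2 * m + 1 \<notin> A" "2 * m + 1 \<notin> B"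
    using L(2) R(2) by (auto simp: A_def B_def)
  moreover have "A \<inter> B = {}"
    using L(2) R(2) unfolding A_def B_def by fastforce
  moreover have "2 * m + 1 \<in> nodes k" using assms by (simp add: nodes_def)
  ultimately have "related k (2 * m + 1) A" "related k (2 * m + 1) B" "A \<inter> B = {}"
    by (simp_all add: related_iff_colsum)
  with card show ?thesis
    unfolding two_disjoint_repair_sets_def by (intro exI[of _ A] exI[of _ B]) simp
qed

lemma two_disjoint_repair_sets:
  assumes "k \<ge> 2" "i \<in> nodes k"
  shows "two_disjoint_repair_sets k 3 i"
  using assms(2)
proof (cases rule: node_cases)
  case 1
  then show ?thesis using two_disjoint_repair_sets_first_node[OF assms(1)] by simp
next
  case 2
  then show ?thesis using two_disjoint_repair_sets_last_node[OF assms(1)] by simp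
next
  case (3 m)
  then show ?thesis using two_disjoint_repair_sets_even_node[of m k] by simp
next
  case (4 m)
  then show ?thesis using two_disjoint_repair_sets_odd_node[of m k] by simp
qed

theorem theorem4p4:
  fixes k :: nat and E :: "nat set"
  assumes "k \<ge> 2"
    and "E \<subseteq> nodes k"
    and "card E \<le> 2"
  shows "allows_parallel_repair k 3 E"
  unfolding allows_parallel_repair_def allows_repair_def
proof
  fix i assume i: "i \<in> E"
  have "finite E" using assms(2) finite_subset by (auto simp: nodes_def)
  then obtain j where Ej: "E \<subseteq> {i, j}" using assms(3) i by (rule card_le_2_subset_pair)
  have "two_disjoint_repair_sets k 3 i" using two_disjoint_repair_sets assms(1,2) i by blast
  then obtain J where "related k i J" "card J \<le> 3" "j \<notin> J"
    by (rule two_disjoint_repair_sets_avoid)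
  with Ej show "\<exists>J. related k i J \<and> card J \<le> 3 \<and> J \<subseteq> nodes k - E"
    unfolding related_def by blast
qed

end
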